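(* Let $\mathcal{F}\times\Theta$ be a class of pairs $(f^*,\boldsymbol{\theta})$ indexing distributions $\mathbf{P}_{(f^*,\boldsymbol{\theta})}$ as described in the context, and assume that for every $(f^*,\boldsymbol{\theta})\in\mathcal{F}\times\Theta$ the measures $\nu^*_s=\mathrm{Law}(f^*(\boldsymbol{X},S)\mid S=s)$, $s\in[K]$, are non-atomic with finite second moments. Fix $t\in(0,1)$ and let $\delta_n=\delta_n(\mathcal{F},\Theta,t)>0$ satisfy $$\inf_{\hat f}\sup_{(f^*,\boldsymbol{\theta})\in\mathcal{F}\times\Theta}\mathbf{P}_{(f^*,\boldsymbol{\theta})}\big(\mathcal{R}(\hat f)\ge\delta_n\big)\ge t,$$ where the infimum is over all estimators. Then for every $\alpha\in[0,1]$ and $t'\in(0,1)$, $$\inf_{\hat f\in\widehat{\mathcal{F}}_{(\alpha,t')}}\sup_{(f^*,\boldsymbol{\theta})\in\mathcal{F}\times\Theta}\mathbf{P}_{(f^*,\boldsymbol{\theta})}\Big(\mathcal{R}^{1/2}(\hat f)\ge\delta_n^{1/2}\vee(1-\sqrt{\alpha})\,\mathcal{U}^{1/2}(f^* )\Big)\ge t\wedge(1-t').$$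
   Context: Setting: for each $(f^*,\boldsymbol{\theta})\in\mathcal{F}\times\Theta$, $f^*:\mathbb{R}^p\times[K]\to\mathbb{R}$ is a regression function and $\boldsymbol{\theta}$ a nuisance parameter; together they determine the joint distribution of a random triple $(\boldsymbol{X},S,Y)\in\mathbb{R}^p\times[K]\times\mathbb{R}$ with $Y=f^*(\boldsymbol{X},S)+\xi$, $\mathbb{E}[\xi\mid\boldsymbol{X}]=0$, and $\mathbf{P}_{(f^*,\boldsymbol{\theta})}$ is the joint law of an i.i.d. sample of size $n$ from it. An estimator $\hat f$ is a measurable map from the sample to measurable functions $\mathbb{R}^p\times[K]\to\mathbb{R}$. Fix $\boldsymbol{w}\in\Delta^{K-1}$. For a prediction $f$ (evaluated with the sample fixed), with respect to the distribution indexed by $(f^*,\boldsymbol\theta)$: $\mathcal{R}(f)=\sum_{s}w_s\mathbb{E}[(f(\boldsymbol{X},S)-f^*(\boldsymbol{X},S))^2\mid S=s]$ and $\mathcal{U}(f)=\min_{\nu\in\mathcal{P}_2(\mathbb{R})}\sum_s w_s\mathsf{W}_2^2(\mathrm{Law}(f(\boldsymbol{X},S)\mid S=s),\nu)$ ($\mathsf{W}_2$ the Wasserstein-2 distance, $\mathcal{P}_2(\mathbb{R})$ probability measures with finite second moment). An estimator $\hat f$ is $(\alpha,t')$-valid if $\inf_{(f^*,\boldsymbol{\theta})\in\mathcal{F}\times\Theta}\mathbf{P}_{(f^*,\boldsymbol{\theta})}(\mathcal{U}(\hat f)\le\alpha\,\mathcal{U}(f^* ))\ge1-t'$; $\widehat{\mathcal{F}}_{(\alpha,t')}$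 is the set of all such estimators. $a\vee b=\max$, $a\wedge b=\min$. *)

theory Defs
  imports "HOL-Probability.Probability"
begin

type_synonym 'p obs = "((real^'p) \<times> nat) \<times> real"

definition obs_space :: "nat \<Rightarrow> 'p::finite obs measure" where
  "obs_space K = (borel \<Otimes>\<^sub>M count_space {1..K}) \<Otimes>\<^sub>M borel"

definition Xof :: "'p obs \<Rightarrow> real^'p" where "Xof z = fst (fst z)"
definition Sof :: "'p obs \<Rightarrow> nat" where "Sof z = snd (fst z)"
definition Yof :: "'p obs \<Rightarrow> real" where "Yof z = snd z"

definition condXS :: "nat \<Rightarrow> 'p::finite obs measure \<Rightarrow> nat \<Rightarrow> ((real^'p) \<times> nat) measure" where
  "condXS K D s = density (distr D (borel \<Otimes>\<^sub>M count_space {1..K}) fst)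
      (\<lambda>z. indicator {z. snd z = s} z / emeasure D {\<omega> \<in> space D. Sof \<omega> = s})"

definition cond_law :: "nat \<Rightarrow> 'p::finite obs measure \<Rightarrow> (real^'p \<Rightarrow> nat \<Rightarrow> real) \<Rightarrow> nat \<Rightarrow> real measure" where
  "cond_law K D f s = distr (condXS K D s) borel (\<lambda>z. f (fst z) (snd z))"

definition risk :: "nat \<Rightarrow> (nat \<Rightarrow> real) \<Rightarrow> 'p::finite obs measure \<Rightarrow> (real^'p \<Rightarrow> nat \<Rightarrow> real)
    \<Rightarrow> (real^'p \<Rightarrow> nat \<Rightarrow> real) \<Rightarrow> ennreal" where
  "risk K w D fstar f = (\<Sum>s\<in>{1..K}. ennreal (w s) *
      (\<integral>\<^sup>+ z. ennreal ((f (fst z) (snd z) - fstar (fst z) (snd z))\<^sup>2) \<partial>condXS K D s))"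

definition couplings :: "real measure \<Rightarrow> real measure \<Rightarrow> (real \<times> real) measure set" where
  "couplings \<mu> \<nu> = {\<pi>. sets \<pi> = sets (borel \<Otimes>\<^sub>M borel) \<and>
      distr \<pi> borel fst = \<mu> \<and> distr \<pi> borel snd = \<nu>}"

definition W2sq :: "real measure \<Rightarrow> real measure \<Rightarrow> ennreal" where
  "W2sq \<mu> \<nu> = (INF \<pi>\<in>couplings \<mu> \<nu>. \<integral>\<^sup>+ xy. ennreal ((fst xy - snd xy)\<^sup>2) \<partial>\<pi>)"

definition P2 :: "real measure set" where
  "P2 = {\<nu>. prob_space \<nu> \<and> sets \<nu> = sets (borel :: real measure) \<and>
      (\<integral>\<^sup>+ x. ennreal (x\<^sup>2) \<partial>\<nu>) < \<top>}"

definition unfairness :: "nat \<Rightarrow> (nat \<Rightarrow> real) \<Rightarrow> 'p::finite obs measure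
    \<Rightarrow> (real^'p \<Rightarrow> nat \<Rightarrow> real) \<Rightarrow> ennreal" where
  "unfairness K w D f = (INF \<nu>\<in>P2. \<Sum>s\<in>{1..K}. ennreal (w s) * W2sq (cond_law K D f s) \<nu>)"

definition sample_law :: "nat \<Rightarrow> 'p::finite obs measure \<Rightarrow> (nat \<Rightarrow> 'p obs) measure" where
  "sample_law n D = PiM {..<n} (\<lambda>_. D)"

definition estimators :: "nat \<Rightarrow> nat \<Rightarrow> ((nat \<Rightarrow> 'p::finite obs) \<Rightarrow> real^'p \<Rightarrow> nat \<Rightarrow> real) set" where
  "estimators K n = {fh. (\<lambda>(\<omega>, z). fh \<omega> (fst z) (snd z)) \<in>
      borel_measurable (PiM {..<n} (\<lambda>_. obs_space K) \<Otimes>\<^sub>M (borel \<Otimes>\<^sub>M count_space {1..K}))}"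

definition valid_estimators :: "nat \<Rightarrow> (nat \<Rightarrow> real) \<Rightarrow> nat
    \<Rightarrow> (real^'p \<Rightarrow> nat \<Rightarrow> real) set \<Rightarrow> 'th set
    \<Rightarrow> ((real^'p \<Rightarrow> nat \<Rightarrow> real) \<Rightarrow> 'th \<Rightarrow> 'p::finite obs measure)
    \<Rightarrow> real \<Rightarrow> real \<Rightarrow> ((nat \<Rightarrow> 'p obs) \<Rightarrow> real^'p \<Rightarrow> nat \<Rightarrow> real) set" where
  "valid_estimators K w n F \<Theta> D \<alpha> t' = {fh \<in> estimators K n.
      (INF (fstar, \<theta>)\<in>F \<times> \<Theta>. emeasure (sample_law n (D fstar \<theta>))
         {\<omega> \<in> space (sample_law n (D fstar \<theta>)).
            unfairness K w (D fstar \<theta>) (fh \<omega>) \<le> ennreal \<alpha> * unfairness K w (D fstar \<theta>) fstar})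
      \<ge> ennreal (1 - t')}"

definition ennsqrt :: "ennreal \<Rightarrow> ennreal" where
  "ennsqrt x = (if x = \<top> then \<top> else ennreal (sqrt (enn2real x)))"

end

theory Submission
  imports Defs
begin

text \<open>Let \<open>fh\<close> be an \<open>(\<alpha>, t')\<close>-valid estimator. If \<open>(1 - sqrt \<alpha>) sqrt U(f*) \<le> sqrt \<delta>\<close> for
  every parameter, the event in question is just \<open>R(fh) \<ge> \<delta>\<close>, whose worst-case probability
  is at least \<open>t\<close> by the minimax hypothesis. Otherwise pick a parameter where this fails.
  The key fact is \<open>sqrt U(f*) \<le> sqrt R(fh) + sqrt U(fh)\<close>: on the real line \<open>W\<^sub>2\<close> is attained by
  the quantile coupling, hence obeys the triangle inequality, and coupling \<open>f*(X,S)\<close> with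
  \<open>fh(X,S)\<close> bounds \<open>W\<^sub>2\<^sup>2\<close> of their conditional laws by the conditional risk. On the validity
  event \<open>U(fh) \<le> \<alpha> U(f*)\<close> this gives \<open>sqrt R(fh) \<ge> (1 - sqrt \<alpha>) sqrt U(f*) \<ge> sqrt \<delta>\<close>, and
  that event has probability at least \<open>1 - t'\<close>.

  The triangle inequality is proved in the squared form
  \<open>(a - c)\<^sup>2 \<le> (a - b)\<^sup>2 / (1 - r) + (b - c)\<^sup>2 / r\<close>, which stays inside \<open>ennreal\<close>, and then
  optimised over \<open>r\<close>.\<close>

section \<open>Wasserstein distance on the real line\<close>

definition uniform_01 :: "real measure" where
  "uniform_01 = restrict_space lborel {0<..<1}"

definition quantile :: "real measure \<Rightarrow> real \<Rightarrow> real" where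
  "quantile M u = Inf {x. u \<le> cdf M x}"

lemma prob_space_uniform_01: "prob_space uniform_01"
  unfolding uniform_01_def
  by (auto simp: emeasure_restrict_space space_restrict_space intro!: prob_spaceI)

lemma space_uniform_01: "space uniform_01 = {0<..<1}"
  unfolding uniform_01_def by (simp add: space_restrict_space)

lemma measurable_quantile[measurable]:
  assumes "real_distribution M"
  shows "quantile M \<in> borel_measurable uniform_01"
proof -
  interpret cdf_distribution M
    using assms by (simp add: cdf_distribution_def)
  have "(\<lambda>u. Inf {x. u \<le> cdf M x}) \<in> borel_measurable (restrict_space borel {0<..<1})"
    by (rule measurable_CI)
  then show ?thesis
    unfolding quantile_def[abs_def] uniform_01_def
    by (simp add: measurable_cong_sets[OF sets_restrict_space_cong[OF sets_lborel] refl])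
qed

lemma quantile_le_iff:
  assumes "real_distribution M" "0 < u" "u < 1"
  shows "quantile M u \<le> x \<longleftrightarrow> u \<le> cdf M x"
proof -
  interpret cdf_distribution M
    using assms by (simp add: cdf_distribution_def)
  show ?thesis
    unfolding quantile_def using pseudoinverse[OF assms(2,3)] by blast
qed

lemma distr_quantile:
  assumes "real_distribution M"
  shows "distr uniform_01 borel (quantile M) = M"
proof -
  interpret cdf_distribution M
    using assms by (simp add: cdf_distribution_def)
  show ?thesis
    unfolding quantile_def[abs_def] uniform_01_def by (rule distr_I_eq_M)
qed

text \<open>Layer-cake form of the squared distance: \<open>(x - y)\<^sup>2\<close> is the Lebesgue measure of the
  square \<open>[min x y, max x y)\<^sup>2\<close>.\<close>
lemma nn_integral_square_diff_layers:
  fixes X Y :: "'a \<Rightarrow> real"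
  assumes "sigma_finite_measure M"
    and [measurable]: "X \<in> borel_measurable M" "Y \<in> borel_measurable M"
  shows "(\<integral>\<^sup>+z. ennreal ((X z - Y z)\<^sup>2) \<partial>M) =
    (\<integral>\<^sup>+s. \<integral>\<^sup>+t. emeasure M {z\<in>space M. min (X z) (Y z) \<le> min s t \<and> max s t < max (X z) (Y z)}
      \<partial>lborel \<partial>lborel)"
proof -
  interpret sigma_finite_measure M by fact
  interpret pair_sigma_finite M lborel by unfold_locales
  define I where "I z = {min (X z) (Y z)..<max (X z) (Y z)}" for z
  define f where "f z s t =
    (if min (X z) (Y z) \<le> min s t \<and> max s t < max (X z) (Y z) then 1 else 0 :: ennreal)" for z s t
  have [measurable]: "(\<lambda>(z, t). f z s t) \<in> borel_measurable (M \<Otimes>\<^sub>M lborel)" for s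
    unfolding f_def by measurable
  have [measurable]: "(\<lambda>(z, s). \<integral>\<^sup>+ t. f z s t \<partial>lborel) \<in> borel_measurable (M \<Otimes>\<^sub>M lborel)"
    unfolding f_def by measurable
  have square: "ennreal ((X z - Y z)\<^sup>2) = (\<integral>\<^sup>+s. \<integral>\<^sup>+t. f z s t \<partial>lborel \<partial>lborel)" for z
  proof -
    have I_measurable: "indicator (I z) \<in> borel_measurable lborel"
      by (simp add: I_def)
    have len: "(\<integral>\<^sup>+s. indicator (I z) s \<partial>lborel) = ennreal \<bar>X z - Y z\<bar>"
      by (simp add: I_def max_def min_def)
    have "ennreal ((X z - Y z)\<^sup>2) = ennreal \<bar>X z - Y z\<bar> * ennreal \<bar>X z - Y z\<bar>"
      by (simp add: ennreal_mult'[symmetric] power2_eq_square)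
    also have "\<dots> = (\<integral>\<^sup>+s. indicator (I z) s * ennreal \<bar>X z - Y z\<bar> \<partial>lborel)"
      by (simp only: nn_integral_multc[OF I_measurable] len)
    also have "\<dots> = (\<integral>\<^sup>+s. \<integral>\<^sup>+t. indicator (I z) s * indicator (I z) t \<partial>lborel \<partial>lborel)"
      by (simp only: nn_integral_cmult[OF I_measurable] len)
    also have "\<dots> = (\<integral>\<^sup>+s. \<integral>\<^sup>+t. f z s t \<partial>lborel \<partial>lborel)"
      by (intro nn_integral_cong) (auto simp: f_def I_def indicator_def)
    finally show ?thesis .
  qed
  have "(\<integral>\<^sup>+z. ennreal ((X z - Y z)\<^sup>2) \<partial>M) = (\<integral>\<^sup>+z. \<integral>\<^sup>+s. \<integral>\<^sup>+t. f z s t \<partial>lborel \<partial>lborel \<partial>M)"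
    by (simp add: square)
  also have "\<dots> = (\<integral>\<^sup>+s. \<integral>\<^sup>+z. \<integral>\<^sup>+t. f z s t \<partial>lborel \<partial>M \<partial>lborel)"
    by (rule Fubini'[symmetric]) measurable
  also have "\<dots> = (\<integral>\<^sup>+s. \<integral>\<^sup>+t. \<integral>\<^sup>+z. f z s t \<partial>M \<partial>lborel \<partial>lborel)"
    by (intro nn_integral_cong Fubini'[symmetric]) measurable
  also have "\<dots> = (\<integral>\<^sup>+s. \<integral>\<^sup>+t. emeasure M {z\<in>space M. min (X z) (Y z) \<le> min s t \<and> max s t < max (X z) (Y z)}
      \<partial>lborel \<partial>lborel)"
  proof (intro nn_integral_cong)
    fix s t
    have "(\<integral>\<^sup>+z. f z s t \<partial>M) = (\<integral>\<^sup>+z. indicator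
        {z\<in>space M. min (X z) (Y z) \<le> min s t \<and> max s t < max (X z) (Y z)} z \<partial>M)"
      by (intro nn_integral_cong) (auto simp: f_def indicator_def)
    then show "(\<integral>\<^sup>+z. f z s t \<partial>M) =
        emeasure M {z\<in>space M. min (X z) (Y z) \<le> min s t \<and> max s t < max (X z) (Y z)}"
      by simp
  qed
  finally show ?thesis .
qed

lemma coupling_measurable:
  assumes "\<pi> \<in> couplings \<mu> \<nu>"
  shows "fst \<in> borel_measurable \<pi>" "snd \<in> borel_measurable \<pi>"
  using assms by (auto simp: couplings_def measurable_cong_sets[of \<pi> "borel \<Otimes>\<^sub>M borel" borel borel])

lemma prob_space_coupling:
  assumes "\<pi> \<in> couplings \<mu> \<nu>" "prob_space \<mu>"
  shows "prob_space \<pi>"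
proof (rule prob_spaceI)
  have "emeasure \<pi> (space \<pi>) = emeasure (distr \<pi> borel fst) UNIV"
    using coupling_measurable[OF assms(1)] by (simp add: emeasure_distr)
  also have "\<dots> = emeasure \<mu> (space \<mu>)"
    using assms(1) by (auto simp: couplings_def)
  also have "\<dots> = 1"
    using assms(2) by (rule prob_space.emeasure_space_1)
  finally show "emeasure \<pi> (space \<pi>) = 1" .
qed

lemma coupling_cdf:
  assumes "\<pi> \<in> couplings \<mu> \<nu>"
  shows "measure \<pi> {z\<in>space \<pi>. fst z \<le> a} = cdf \<mu> a"
    and "measure \<pi> {z\<in>space \<pi>. snd z \<le> a} = cdf \<nu> a"
  using assms coupling_measurable[OF assms]
  by (auto simp: couplings_def cdf_def measure_distr vimage_def Int_def conj_commute)

lemma W2sq_distr_le: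
  fixes X Y :: "'a \<Rightarrow> real"
  assumes [measurable]: "X \<in> borel_measurable M" "Y \<in> borel_measurable M"
  shows "W2sq (distr M borel X) (distr M borel Y) \<le> (\<integral>\<^sup>+z. ennreal ((X z - Y z)\<^sup>2) \<partial>M)"
proof -
  define \<pi> where "\<pi> = distr M (borel \<Otimes>\<^sub>M borel) (\<lambda>z. (X z, Y z))"
  have "\<pi> \<in> couplings (distr M borel X) (distr M borel Y)"
    unfolding couplings_def \<pi>_def by (simp add: distr_distr comp_def)
  then have "W2sq (distr M borel X) (distr M borel Y) \<le> (\<integral>\<^sup>+xy. ennreal ((fst xy - snd xy)\<^sup>2) \<partial>\<pi>)"
    unfolding W2sq_def by (rule INF_lower)
  also have "\<dots> = (\<integral>\<^sup>+z. ennreal ((X z - Y z)\<^sup>2) \<partial>M)"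
    unfolding \<pi>_def by (simp add: nn_integral_distr)
  finally show ?thesis .
qed

lemma measure_le_diff_le_emeasure_cross:
  fixes X Y :: "'a \<Rightarrow> real"
  assumes "prob_space P" and [measurable]: "X \<in> borel_measurable P" "Y \<in> borel_measurable P"
  shows "ennreal (measure P {z\<in>space P. X z \<le> a} - measure P {z\<in>space P. Y z \<le> b})
     \<le> emeasure P {z\<in>space P. X z \<le> a \<and> b < Y z}"
proof -
  interpret prob_space P by fact
  have "measure P {z\<in>space P. X z \<le> a}
      \<le> measure P ({z\<in>space P. X z \<le> a \<and> b < Y z} \<union> {z\<in>space P. Y z \<le> b})"
    by (intro finite_measure_mono) auto
  also have "\<dots> \<le> measure P {z\<in>space P. X z \<le> a \<and> b < Y z} + measure P {z\<in>space P. Y z \<le> b}"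
    by (intro measure_Un_le) auto
  finally show ?thesis
    by (simp add: emeasure_eq_measure ennreal_leI)
qed

lemma emeasure_quantile_cross_le:
  assumes "real_distribution \<mu>" "real_distribution \<nu>"
  shows "emeasure uniform_01 {u\<in>space uniform_01. quantile \<mu> u \<le> a \<and> b < quantile \<nu> u}
    \<le> ennreal (cdf \<mu> a - cdf \<nu> b)"
proof -
  let ?A = "{u\<in>space uniform_01. quantile \<mu> u \<le> a \<and> b < quantile \<nu> u}"
  have "?A \<subseteq> {cdf \<nu> b<..cdf \<mu> a}"
    using quantile_le_iff[OF assms(1)] quantile_le_iff[OF assms(2)]
    by (force simp: space_uniform_01 not_le[symmetric])
  moreover have "?A \<subseteq> {0<..<1}"
    by (auto simp: space_uniform_01)
  ultimately have "emeasure uniform_01 ?A \<le> emeasure lborel {cdf \<nu> b<..cdf \<mu> a}"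
    unfolding uniform_01_def by (subst emeasure_restrict_space) (auto intro!: emeasure_mono)
  also have "\<dots> = ennreal (cdf \<mu> a - cdf \<nu> b)"
    by (cases "cdf \<nu> b \<le> cdf \<mu> a") (auto simp: ennreal_neg)
  finally show ?thesis .
qed

text \<open>On each layer \<open>{min x y \<le> m, M < max x y}\<close> (\<open>m \<le> M\<close>) the quantile coupling has mass at most
  \<open>(F\<^sub>\<mu> m - F\<^sub>\<nu> M)\<^sup>+ + (F\<^sub>\<nu> m - F\<^sub>\<mu> M)\<^sup>+\<close>, and every coupling has at least that much.\<close>
lemma quantile_coupling_le_coupling:
  assumes \<mu>: "real_distribution \<mu>" and \<nu>: "real_distribution \<nu>" and \<pi>: "\<pi> \<in> couplings \<mu> \<nu>"
  shows "(\<integral>\<^sup>+u. ennreal ((quantile \<mu> u - quantile \<nu> u)\<^sup>2) \<partial>uniform_01)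
    \<le> (\<integral>\<^sup>+xy. ennreal ((fst xy - snd xy)\<^sup>2) \<partial>\<pi>)"
proof -
  have "prob_space \<pi>"
    using prob_space_coupling[OF \<pi>] \<mu> by (auto simp: real_distribution_def)
  note [measurable] = coupling_measurable[OF \<pi>] measurable_quantile[OF \<mu>] measurable_quantile[OF \<nu>]
  have layer_le: "emeasure uniform_01 {u\<in>space uniform_01. min (quantile \<mu> u) (quantile \<nu> u) \<le> m
        \<and> M < max (quantile \<mu> u) (quantile \<nu> u)}
      \<le> emeasure \<pi> {z\<in>space \<pi>. min (fst z) (snd z) \<le> m \<and> M < max (fst z) (snd z)}"
    if "m \<le> M" for m M
  proof -
    let ?Q = "\<lambda>f g. {u\<in>space uniform_01. f u \<le> m \<and> M < g u}"
    let ?C = "\<lambda>f g. {z\<in>space \<pi>. f z \<le> m \<and> M < g z}"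
    have "emeasure uniform_01 {u\<in>space uniform_01. min (quantile \<mu> u) (quantile \<nu> u) \<le> m
        \<and> M < max (quantile \<mu> u) (quantile \<nu> u)}
      \<le> emeasure uniform_01 (?Q (quantile \<mu>) (quantile \<nu>) \<union> ?Q (quantile \<nu>) (quantile \<mu>))"
      using that by (intro emeasure_mono) auto
    also have "\<dots> \<le> emeasure uniform_01 (?Q (quantile \<mu>) (quantile \<nu>))
        + emeasure uniform_01 (?Q (quantile \<nu>) (quantile \<mu>))"
      by (intro emeasure_subadditive) measurable
    also have "\<dots> \<le> ennreal (cdf \<mu> m - cdf \<nu> M) + ennreal (cdf \<nu> m - cdf \<mu> M)"
      by (intro add_mono emeasure_quantile_cross_le \<mu> \<nu>)
    also have "\<dots> \<le> emeasure \<pi> (?C fst snd) + emeasure \<pi> (?C snd fst)"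
      using measure_le_diff_le_emeasure_cross[OF \<open>prob_space \<pi>\<close>, of fst snd m M]
        measure_le_diff_le_emeasure_cross[OF \<open>prob_space \<pi>\<close>, of snd fst m M]
      by (intro add_mono) (simp_all add: coupling_cdf[OF \<pi>])
    also have "\<dots> = emeasure \<pi> (?C fst snd \<union> ?C snd fst)"
      using that by (intro plus_emeasure) auto
    also have "?C fst snd \<union> ?C snd fst
        = {z\<in>space \<pi>. min (fst z) (snd z) \<le> m \<and> M < max (fst z) (snd z)}"
      using that by auto
    finally show ?thesis .
  qed
  show ?thesis
    unfolding nn_integral_square_diff_layers[OF prob_space_imp_sigma_finite[OF prob_space_uniform_01]
        measurable_quantile[OF \<mu>] measurable_quantile[OF \<nu>]]
      nn_integral_square_diff_layers[OF prob_space_imp_sigma_finite[OF \<open>prob_space \<pi>\<close>]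
        coupling_measurable[OF \<pi>]]
    by (intro nn_integral_mono layer_le) simp
qed

lemma W2sq_eq_quantile_coupling:
  assumes \<mu>: "real_distribution \<mu>" and \<nu>: "real_distribution \<nu>"
  shows "W2sq \<mu> \<nu> = (\<integral>\<^sup>+u. ennreal ((quantile \<mu> u - quantile \<nu> u)\<^sup>2) \<partial>uniform_01)"
proof (rule antisym)
  show "W2sq \<mu> \<nu> \<le> (\<integral>\<^sup>+u. ennreal ((quantile \<mu> u - quantile \<nu> u)\<^sup>2) \<partial>uniform_01)"
    using W2sq_distr_le[OF measurable_quantile[OF \<mu>] measurable_quantile[OF \<nu>]]
    by (simp add: distr_quantile \<mu> \<nu>)
  show "(\<integral>\<^sup>+u. ennreal ((quantile \<mu> u - quantile \<nu> u)\<^sup>2) \<partial>uniform_01) \<le> W2sq \<mu> \<nu>"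
    unfolding W2sq_def by (intro INF_greatest quantile_coupling_le_coupling \<mu> \<nu>)
qed

lemma square_diff_le_weighted:
  fixes a b c r :: real
  assumes "0 < r" "r < 1"
  shows "(a - c)\<^sup>2 \<le> (a - b)\<^sup>2 / (1 - r) + (b - c)\<^sup>2 / r"
proof -
  have "r * (1 - r) * (a - c)\<^sup>2 \<le> r * (a - b)\<^sup>2 + (1 - r) * (b - c)\<^sup>2"
    using zero_le_power2[of "r * (a - b) - (1 - r) * (b - c)"]
    by (simp add: power2_eq_square algebra_simps)
  with assms show ?thesis
    by (simp add: field_simps)
qed

lemma W2sq_weighted_triangle:
  assumes \<mu>: "real_distribution \<mu>" and \<rho>: "real_distribution \<rho>" and \<nu>: "real_distribution \<nu>"
    and r: "0 < r" "r < 1"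
  shows "W2sq \<mu> \<nu> \<le> ennreal (1 / (1 - r)) * W2sq \<mu> \<rho> + ennreal (1 / r) * W2sq \<rho> \<nu>"
proof -
  note [measurable] = measurable_quantile[OF \<mu>] measurable_quantile[OF \<rho>] measurable_quantile[OF \<nu>]
  have pointwise: "ennreal ((quantile \<mu> u - quantile \<nu> u)\<^sup>2)
      \<le> ennreal (1 / (1 - r)) * ennreal ((quantile \<mu> u - quantile \<rho> u)\<^sup>2)
        + ennreal (1 / r) * ennreal ((quantile \<rho> u - quantile \<nu> u)\<^sup>2)" for u
    using square_diff_le_weighted[OF r, where a = "quantile \<mu> u" and b = "quantile \<rho> u" and c = "quantile \<nu> u"] r
    by (simp add: ennreal_mult[symmetric] ennreal_plus[symmetric] del: ennreal_plus)
  have "W2sq \<mu> \<nu> \<le> (\<integral>\<^sup>+u. ennreal (1 / (1 - r)) * ennreal ((quantile \<mu> u - quantile \<rho> u)\<^sup>2)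
      + ennreal (1 / r) * ennreal ((quantile \<rho> u - quantile \<nu> u)\<^sup>2) \<partial>uniform_01)"
    unfolding W2sq_eq_quantile_coupling[OF \<mu> \<nu>] by (intro nn_integral_mono pointwise)
  also have "\<dots> = ennreal (1 / (1 - r)) * W2sq \<mu> \<rho> + ennreal (1 / r) * W2sq \<rho> \<nu>"
    by (simp add: nn_integral_add nn_integral_cmult W2sq_eq_quantile_coupling \<mu> \<rho> \<nu>)
  finally show ?thesis .
qed

lemma return_0_in_P2: "return borel (0::real) \<in> P2"
  unfolding P2_def by (auto simp: prob_space_return nn_integral_return)

lemma W2sq_return_0_le:
  assumes "real_distribution \<mu>"
  shows "W2sq \<mu> (return borel 0) \<le> (\<integral>\<^sup>+x. ennreal (x\<^sup>2) \<partial>\<mu>)"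
proof -
  interpret real_distribution \<mu> by fact
  have "W2sq (distr \<mu> borel (\<lambda>x. x)) (distr \<mu> borel (\<lambda>_. 0)) \<le> (\<integral>\<^sup>+x. ennreal ((x - 0)\<^sup>2) \<partial>\<mu>)"
    by (intro W2sq_distr_le) auto
  then show ?thesis
    by (simp add: distr_id2)
qed

lemma real_distribution_if_P2: "\<nu> \<in> P2 \<Longrightarrow> real_distribution \<nu>"
  unfolding P2_def real_distribution_def real_distribution_axioms_def by auto

section \<open>Square roots\<close>

lemma sqrt_le_add_sqrt_if_weighted_bound:
  fixes u a b :: real
  assumes "0 \<le> a" "0 \<le> b" and bound: "\<And>r. 0 < r \<Longrightarrow> r < 1 \<Longrightarrow> u \<le> a / (1 - r) + b / r"
  shows "sqrt u \<le> sqrt a + sqrt b"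
proof -
  consider "b = 0" | "a = 0" | "0 < a" "0 < b"
    using assms by linarith
  then have "u \<le> (sqrt a + sqrt b)\<^sup>2"
  proof cases
    case 1
    have "z * u \<le> a" if "0 < z" "z < 1" for z
      using bound[of "1 - z"] that 1 by (simp add: pos_le_divide_eq mult.commute)
    then show ?thesis
      using 1 assms by (simp add: field_le_mult_one_interval)
  next
    case 2
    have "z * u \<le> b" if "0 < z" "z < 1" for z
      using bound[of z] that 2 by (simp add: pos_le_divide_eq mult.commute)
    then show ?thesis
      using 2 assms by (simp add: field_le_mult_one_interval)
  next
    case 3
    then have den: "0 < sqrt a + sqrt b"
      by (simp add: add_pos_pos)
    define r where "r = sqrt b / (sqrt a + sqrt b)"
    have r: "0 < r" "r < 1"
      using 3 den by (simp_all add: r_def)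
    have "1 - r = sqrt a / (sqrt a + sqrt b)"
      using den by (simp add: r_def field_simps)
    then have "a / (1 - r) = a / sqrt a * (sqrt a + sqrt b)" "b / r = b / sqrt b * (sqrt a + sqrt b)"
      by (simp_all add: r_def)
    then have "a / (1 - r) + b / r = (sqrt a + sqrt b)\<^sup>2"
      using 3 by (simp add: real_div_sqrt power2_eq_square distrib_right)
    then show ?thesis
      using bound[OF r] by simp
  qed
  then have "sqrt u \<le> sqrt ((sqrt a + sqrt b)\<^sup>2)"
    by (rule real_sqrt_le_mono)
  then show ?thesis
    using assms by simp
qed

lemma ennsqrt_ennreal: "ennsqrt (ennreal x) = ennreal (sqrt x)"
  by (cases "0 \<le> x") (auto simp: ennsqrt_def ennreal_neg)

lemma ennsqrt_top[simp]: "ennsqrt \<top> = \<top>"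
  by (simp add: ennsqrt_def)

lemma le_ennsqrt_iff: "c \<le> ennsqrt x \<longleftrightarrow> c * c \<le> x"
proof (cases x)
  case x: (real \<xi>)
  show ?thesis
  proof (cases c)
    case c: (real \<gamma>)
    have "\<gamma> \<le> sqrt \<xi> \<longleftrightarrow> \<gamma>\<^sup>2 \<le> \<xi>"
      using real_sqrt_le_iff[of "\<gamma>\<^sup>2" \<xi>] c by simp
    then show ?thesis
      using c x by (simp add: ennsqrt_ennreal ennreal_mult[symmetric] power2_eq_square)
  qed (simp add: ennsqrt_ennreal x top_unique)
qed simp

lemma ennsqrt_le_iff: "ennsqrt y \<le> ennsqrt x \<longleftrightarrow> y \<le> x"
proof -
  have "ennsqrt y * ennsqrt y = y"
    by (cases y) (simp_all add: ennsqrt_ennreal ennreal_mult[symmetric])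
  then show ?thesis
    by (simp add: le_ennsqrt_iff)
qed

lemma ennsqrt_le_add_if_weighted_bound:
  fixes u a b :: ennreal
  assumes bound: "\<And>r. 0 < r \<Longrightarrow> r < 1 \<Longrightarrow> u \<le> ennreal (1 / (1 - r)) * a + ennreal (1 / r) * b"
  shows "ennsqrt u \<le> ennsqrt a + ennsqrt b"
proof (cases "a = \<top> \<or> b = \<top>")
  case False
  then obtain a' b' where a: "a = ennreal a'" "0 \<le> a'" and b: "b = ennreal b'" "0 \<le> b'"
    by (cases a; cases b) auto
  have real_bound: "u \<le> ennreal (a' / (1 - r) + b' / r)" if "0 < r" "r < 1" for r
    using bound[OF that] that a b
    by (simp add: ennreal_mult[symmetric] ennreal_plus[symmetric] del: ennreal_plus)
  then obtain u' where u: "u = ennreal u'" "0 \<le> u'"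
    using real_bound[of "1/2"] by (cases u) (auto simp: top_unique)
  have "sqrt u' \<le> sqrt a' + sqrt b'"
    using real_bound u a b by (intro sqrt_le_add_sqrt_if_weighted_bound)
       (simp_all add: ennreal_le_iff add_nonneg_nonneg divide_nonneg_nonneg del: ennreal_plus)
  then show ?thesis
    using u a b by (simp add: ennsqrt_ennreal ennreal_plus[symmetric] del: ennreal_plus)
qed auto

lemma one_minus_sqrt_mult_ennsqrt_le:
  fixes u x \<rho> :: ennreal and \<alpha> :: real
  assumes tri: "ennsqrt u \<le> ennsqrt \<rho> + ennsqrt x" and x: "x \<le> ennreal \<alpha> * u"
    and "u < \<top>" "0 \<le> \<alpha>"
  shows "ennreal (1 - sqrt \<alpha>) * ennsqrt u \<le> ennsqrt \<rho>"
proof (cases "\<rho> = \<top>")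
  case False
  obtain \<rho>' u' where \<rho>: "\<rho> = ennreal \<rho>'" "0 \<le> \<rho>'" and u: "u = ennreal u'" "0 \<le> u'"
    using False \<open>u < \<top>\<close> by (cases \<rho>; cases u) auto
  moreover obtain x' where x': "x = ennreal x'" "0 \<le> x'" "x' \<le> \<alpha> * u'"
    using x u \<open>0 \<le> \<alpha>\<close> by (cases x) (auto simp: ennreal_mult[symmetric] ennreal_le_iff top_unique)
  ultimately have "sqrt u' \<le> sqrt \<rho>' + sqrt x'"
    using tri by (simp add: ennsqrt_ennreal ennreal_plus[symmetric] del: ennreal_plus)
  moreover have "sqrt x' \<le> sqrt \<alpha> * sqrt u'"
    using x' by (simp flip: real_sqrt_mult)
  ultimately have "(1 - sqrt \<alpha>) * sqrt u' \<le> sqrt \<rho>'"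
    by (simp add: algebra_simps)
  then show ?thesis
    using \<rho> u by (simp add: ennsqrt_ennreal ennreal_mult''[symmetric] ennreal_leI)
qed simp

section \<open>Unfairness and risk\<close>

lemma sets_condXS: "sets (condXS K D s) = sets (borel \<Otimes>\<^sub>M count_space {1..K})"
  unfolding condXS_def by (simp only: sets_density sets_distr)

lemma measurable_condXS:
  "(\<lambda>z. f (fst z) (snd z)) \<in> borel_measurable (borel \<Otimes>\<^sub>M count_space {1..K}) \<Longrightarrow>
    (\<lambda>z. f (fst z) (snd z)) \<in> borel_measurable (condXS K D s)"
  by (simp add: measurable_cong_sets[OF sets_condXS refl])

lemma prob_space_condXS:
  assumes "prob_space (cond_law K D f s)"
    and "(\<lambda>z. f (fst z) (snd z)) \<in> borel_measurable (borel \<Otimes>\<^sub>M count_space {1..K})"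
  shows "prob_space (condXS K D s)"
proof (rule prob_spaceI)
  have "emeasure (condXS K D s) (space (condXS K D s)) = emeasure (cond_law K D f s) UNIV"
    unfolding cond_law_def using measurable_condXS[OF assms(2)] by (simp add: emeasure_distr)
  also have "\<dots> = 1"
    using prob_space.emeasure_space_1[OF assms(1)] by (simp add: cond_law_def)
  finally show "emeasure (condXS K D s) (space (condXS K D s)) = 1" .
qed

lemma real_distribution_cond_law:
  assumes "prob_space (condXS K D s)"
    and "(\<lambda>z. g (fst z) (snd z)) \<in> borel_measurable (borel \<Otimes>\<^sub>M count_space {1..K})"
  shows "real_distribution (cond_law K D g s)"
  unfolding cond_law_def real_distribution_def real_distribution_axioms_def
  using prob_space.prob_space_distr[OF assms(1) measurable_condXS[OF assms(2)]] by simp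

lemma W2sq_cond_law_le:
  assumes "(\<lambda>z. f (fst z) (snd z)) \<in> borel_measurable (borel \<Otimes>\<^sub>M count_space {1..K})"
    and "(\<lambda>z. g (fst z) (snd z)) \<in> borel_measurable (borel \<Otimes>\<^sub>M count_space {1..K})"
  shows "W2sq (cond_law K D f s) (cond_law K D g s)
    \<le> (\<integral>\<^sup>+z. ennreal ((g (fst z) (snd z) - f (fst z) (snd z))\<^sup>2) \<partial>condXS K D s)"
  using W2sq_distr_le[OF measurable_condXS[OF assms(1)] measurable_condXS[OF assms(2)]]
  by (simp add: cond_law_def power2_commute)

lemma unfairness_less_top:
  assumes "\<And>s. s \<in> {1..K} \<Longrightarrow> prob_space (cond_law K D f s)"
    and "\<And>s. s \<in> {1..K} \<Longrightarrow> (\<integral>\<^sup>+x. ennreal (x\<^sup>2) \<partial>cond_law K D f s) < \<top>"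
    and "(\<lambda>z. f (fst z) (snd z)) \<in> borel_measurable (borel \<Otimes>\<^sub>M count_space {1..K})"
  shows "unfairness K w D f < \<top>"
proof -
  have "unfairness K w D f \<le> (\<Sum>s\<in>{1..K}. ennreal (w s) * W2sq (cond_law K D f s) (return borel 0))"
    unfolding unfairness_def using return_0_in_P2 by (rule INF_lower)
  also have "\<dots> \<le> (\<Sum>s\<in>{1..K}. ennreal (w s) * (\<integral>\<^sup>+x. ennreal (x\<^sup>2) \<partial>cond_law K D f s))"
    using assms by (intro sum_mono mult_left_mono W2sq_return_0_le real_distribution_cond_law
        prob_space_condXS) auto
  also have "\<dots> < \<top>"
    using assms(2) by (simp add: less_top[symmetric] ennreal_mult_eq_top_iff)
  finally show ?thesis .
qed

lemma ennreal_le_add_mult_INF: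
  fixes a b c :: ennreal and g :: "'x \<Rightarrow> ennreal"
  assumes "X \<noteq> {}" "c < \<top>" and "\<And>x. x \<in> X \<Longrightarrow> a \<le> b + c * g x"
  shows "a \<le> b + c * (INF x\<in>X. g x)"
proof -
  define H where "H y = b + c * y" for y
  have "mono H"
    unfolding H_def by (intro monoI add_left_mono mult_left_mono) auto
  moreover have "continuous_on UNIV H"
    unfolding H_def using assms(2)
    by (intro continuous_on_add continuous_on_const ennreal_continuous_on_cmult continuous_on_id)
  ultimately have "H (Inf (g ` X)) = (INF y\<in>g ` X. H y)"
    using assms(1) by (intro continuous_at_Inf_mono) (auto intro: continuous_on_imp_continuous_within)
  moreover have "a \<le> (INF y\<in>g ` X. H y)"
    using assms(3) by (auto intro!: INF_greatest simp: H_def)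
  ultimately show ?thesis
    unfolding H_def by (simp add: image_image)
qed

text \<open>Any candidate barycenter \<open>\<nu>\<close> for \<open>g\<close> serves for \<open>f\<close> as well: go from the conditional
  laws of \<open>f\<close> to \<open>\<nu>\<close> through those of \<open>g\<close>.\<close>
lemma unfairness_le_weighted:
  assumes pf: "\<And>s. s \<in> {1..K} \<Longrightarrow> prob_space (cond_law K D f s)"
    and fm: "(\<lambda>z. f (fst z) (snd z)) \<in> borel_measurable (borel \<Otimes>\<^sub>M count_space {1..K})"
    and gm: "(\<lambda>z. g (fst z) (snd z)) \<in> borel_measurable (borel \<Otimes>\<^sub>M count_space {1..K})"
    and r: "0 < r" "r < 1"
  shows "unfairness K w D f
    \<le> ennreal (1 / (1 - r)) * risk K w D f g + ennreal (1 / r) * unfairness K w D g"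
  unfolding unfairness_def[of K w D g]
proof (rule ennreal_le_add_mult_INF)
  show "P2 \<noteq> {}"
    using return_0_in_P2 by blast
  fix \<nu> assume "\<nu> \<in> P2"
  have "W2sq (cond_law K D f s) \<nu>
      \<le> ennreal (1 / (1 - r)) * (\<integral>\<^sup>+z. ennreal ((g (fst z) (snd z) - f (fst z) (snd z))\<^sup>2) \<partial>condXS K D s)
        + ennreal (1 / r) * W2sq (cond_law K D g s) \<nu>" if "s \<in> {1..K}" for s
  proof -
    have "prob_space (condXS K D s)"
      using prob_space_condXS pf fm that by blast
    then have "W2sq (cond_law K D f s) \<nu> \<le> ennreal (1 / (1 - r)) * W2sq (cond_law K D f s) (cond_law K D g s)
        + ennreal (1 / r) * W2sq (cond_law K D g s) \<nu>"
      using fm gm \<open>\<nu> \<in> P2\<close> r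
      by (intro W2sq_weighted_triangle real_distribution_cond_law real_distribution_if_P2)
    also have "\<dots> \<le> ennreal (1 / (1 - r)) * (\<integral>\<^sup>+z. ennreal ((g (fst z) (snd z) - f (fst z) (snd z))\<^sup>2) \<partial>condXS K D s)
        + ennreal (1 / r) * W2sq (cond_law K D g s) \<nu>"
      by (intro add_right_mono mult_left_mono W2sq_cond_law_le fm gm) simp
    finally show ?thesis .
  qed
  then have "unfairness K w D f \<le> (\<Sum>s\<in>{1..K}. ennreal (w s) *
      (ennreal (1 / (1 - r)) * (\<integral>\<^sup>+z. ennreal ((g (fst z) (snd z) - f (fst z) (snd z))\<^sup>2) \<partial>condXS K D s)
        + ennreal (1 / r) * W2sq (cond_law K D g s) \<nu>))"
    unfolding unfairness_def using \<open>\<nu> \<in> P2\<close>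
    by (intro INF_lower2[OF \<open>\<nu> \<in> P2\<close>] sum_mono mult_left_mono) auto
  also have "\<dots> = ennreal (1 / (1 - r)) * risk K w D f g
      + ennreal (1 / r) * (\<Sum>s\<in>{1..K}. ennreal (w s) * W2sq (cond_law K D g s) \<nu>)"
    unfolding risk_def by (simp add: distrib_left sum.distrib sum_distrib_left mult.left_commute)
  finally show "unfairness K w D f \<le> ennreal (1 / (1 - r)) * risk K w D f g
      + ennreal (1 / r) * (\<Sum>s\<in>{1..K}. ennreal (w s) * W2sq (cond_law K D g s) \<nu>)" .
qed simp

lemma ennsqrt_unfairness_le:
  assumes "\<And>s. s \<in> {1..K} \<Longrightarrow> prob_space (cond_law K D f s)"
    and "(\<lambda>z. f (fst z) (snd z)) \<in> borel_measurable (borel \<Otimes>\<^sub>M count_space {1..K})"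
    and "(\<lambda>z. g (fst z) (snd z)) \<in> borel_measurable (borel \<Otimes>\<^sub>M count_space {1..K})"
  shows "ennsqrt (unfairness K w D f) \<le> ennsqrt (risk K w D f g) + ennsqrt (unfairness K w D g)"
  using assms by (intro ennsqrt_le_add_if_weighted_bound unfairness_le_weighted)

lemma risk_lower_bound_if_fairer:
  assumes "\<And>s. s \<in> {1..K} \<Longrightarrow> prob_space (cond_law K D f s)"
    and "(\<lambda>z. f (fst z) (snd z)) \<in> borel_measurable (borel \<Otimes>\<^sub>M count_space {1..K})"
    and "(\<lambda>z. g (fst z) (snd z)) \<in> borel_measurable (borel \<Otimes>\<^sub>M count_space {1..K})"
    and "unfairness K w D f < \<top>" "0 \<le> \<alpha>"
    and "unfairness K w D g \<le> ennreal \<alpha> * unfairness K w D f"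
  shows "ennreal (1 - sqrt \<alpha>) * ennsqrt (unfairness K w D f) \<le> ennsqrt (risk K w D f g)"
  using one_minus_sqrt_mult_ennsqrt_le[OF ennsqrt_unfairness_le[OF assms(1-3)] assms(6,4,5)] .

lemma sets_sample_law:
  "sets D = sets (obs_space K) \<Longrightarrow> sets (sample_law n D) = sets (PiM {..<n} (\<lambda>_. obs_space K))"
  unfolding sample_law_def by (rule sets_PiM_cong) auto

lemma estimator_measurable_at_sample:
  assumes "fh \<in> estimators K n" "sets D = sets (obs_space K)" "\<omega> \<in> space (sample_law n D)"
  shows "(\<lambda>z. fh \<omega> (fst z) (snd z)) \<in> borel_measurable (borel \<Otimes>\<^sub>M count_space {1..K})"
  using measurable_Pair2[of "\<lambda>(\<omega>, z). fh \<omega> (fst z) (snd z)", simplified]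
    assms sets_eq_imp_space_eq[OF sets_sample_law[OF assms(2)]]
  by (auto simp: estimators_def)

lemma measurable_risk_estimator:
  assumes fh: "fh \<in> estimators K n" and sets_D: "sets D = sets (obs_space K)"
    and pf: "\<And>s. s \<in> {1..K} \<Longrightarrow> prob_space (cond_law K D f s)"
    and fm: "(\<lambda>z. f (fst z) (snd z)) \<in> borel_measurable (borel \<Otimes>\<^sub>M count_space {1..K})"
  shows "(\<lambda>\<omega>. risk K w D f (fh \<omega>)) \<in> borel_measurable (sample_law n D)"
proof -
  have "(\<lambda>\<omega>. \<integral>\<^sup>+z. ennreal ((fh \<omega> (fst z) (snd z) - f (fst z) (snd z))\<^sup>2) \<partial>condXS K D s)
      \<in> borel_measurable (sample_law n D)" if "s \<in> {1..K}" for s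
  proof -
    interpret sigma_finite_measure "condXS K D s"
      using prob_space_condXS[OF pf[OF that] fm] by (simp add: prob_space_imp_sigma_finite)
    have sets_eq: "sets (sample_law n D \<Otimes>\<^sub>M condXS K D s)
        = sets (PiM {..<n} (\<lambda>_. obs_space K) \<Otimes>\<^sub>M (borel \<Otimes>\<^sub>M count_space {1..K}))"
      by (rule sets_pair_measure_cong[OF sets_sample_law[OF sets_D] sets_condXS])
    have [measurable]: "(\<lambda>(\<omega>, z). fh \<omega> (fst z) (snd z)) \<in> borel_measurable (sample_law n D \<Otimes>\<^sub>M condXS K D s)"
      using fh by (simp add: estimators_def measurable_cong_sets[OF sets_eq refl])
    have [measurable]: "(\<lambda>z. f (fst z) (snd z)) \<in> borel_measurable (condXS K D s)"
      by (rule measurable_condXS[OF fm])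
    show ?thesis
      by measurable
  qed
  then show ?thesis
    unfolding risk_def by measurable
qed

lemma SUP_risk_event_ge_minimax:
  assumes "fh \<in> estimators K n"
    and minimax: "(INF fh\<in>estimators K n. SUP (fstar, \<theta>)\<in>F \<times> \<Theta>.
        emeasure (sample_law n (D fstar \<theta>))
          {\<omega> \<in> space (sample_law n (D fstar \<theta>)).
             risk K w (D fstar \<theta>) fstar (fh \<omega>) \<ge> ennreal \<delta>}) \<ge> ennreal t"
    and small: "\<And>fstar \<theta>. (fstar, \<theta>) \<in> F \<times> \<Theta> \<Longrightarrow> c fstar \<theta> \<le> ennsqrt (ennreal \<delta>)"
  shows "ennreal t \<le> (SUP (fstar, \<theta>)\<in>F \<times> \<Theta>. emeasure (sample_law n (D fstar \<theta>))
    {\<omega> \<in> space (sample_law n (D fstar \<theta>)).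
       ennsqrt (risk K w (D fstar \<theta>) fstar (fh \<omega>)) \<ge> max (ennsqrt (ennreal \<delta>)) (c fstar \<theta>)})"
proof -
  have "ennreal t \<le> (SUP (fstar, \<theta>)\<in>F \<times> \<Theta>. emeasure (sample_law n (D fstar \<theta>))
      {\<omega> \<in> space (sample_law n (D fstar \<theta>)). risk K w (D fstar \<theta>) fstar (fh \<omega>) \<ge> ennreal \<delta>})"
    using minimax INF_lower[OF assms(1)] order_trans by blast
  also have "\<dots> = (SUP (fstar, \<theta>)\<in>F \<times> \<Theta>. emeasure (sample_law n (D fstar \<theta>))
      {\<omega> \<in> space (sample_law n (D fstar \<theta>)).
         ennsqrt (risk K w (D fstar \<theta>) fstar (fh \<omega>)) \<ge> max (ennsqrt (ennreal \<delta>)) (c fstar \<theta>)})"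
    using small by (intro SUP_cong refl) (clarsimp simp: max_absorb1 ennsqrt_le_iff simp del: max.bounded_iff)
  finally show ?thesis .
qed

lemma emeasure_fair_event_le_risk_event:
  assumes "fh \<in> estimators K n" "sets D = sets (obs_space K)"
    and "\<And>s. s \<in> {1..K} \<Longrightarrow> prob_space (cond_law K D f s)"
    and "\<And>s. s \<in> {1..K} \<Longrightarrow> (\<integral>\<^sup>+x. ennreal (x\<^sup>2) \<partial>cond_law K D f s) < \<top>"
    and fm: "(\<lambda>z. f (fst z) (snd z)) \<in> borel_measurable (borel \<Otimes>\<^sub>M count_space {1..K})"
    and "0 \<le> \<alpha>" and large: "ennsqrt (ennreal \<delta>) \<le> ennreal (1 - sqrt \<alpha>) * ennsqrt (unfairness K w D f)"
  shows "emeasure (sample_law n D)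
      {\<omega> \<in> space (sample_law n D). unfairness K w D (fh \<omega>) \<le> ennreal \<alpha> * unfairness K w D f}
    \<le> emeasure (sample_law n D) {\<omega> \<in> space (sample_law n D). ennsqrt (risk K w D f (fh \<omega>))
        \<ge> max (ennsqrt (ennreal \<delta>)) (ennreal (1 - sqrt \<alpha>) * ennsqrt (unfairness K w D f))}"
proof (rule emeasure_mono)
  note [measurable] = measurable_risk_estimator[OF assms(1-3) fm]
  have "ennreal (1 - sqrt \<alpha>) * ennsqrt (unfairness K w D f) \<le> ennsqrt (risk K w D f (fh \<omega>))"
    if "\<omega> \<in> space (sample_law n D)" "unfairness K w D (fh \<omega>) \<le> ennreal \<alpha> * unfairness K w D f" for \<omega>
    by (rule risk_lower_bound_if_fairer[OF assms(3) fm estimator_measurable_at_sample[OF assms(1,2) that(1)]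
          unfairness_less_top[OF assms(3,4) fm] \<open>0 \<le> \<alpha>\<close> that(2)])
  then show "{\<omega> \<in> space (sample_law n D). unfairness K w D (fh \<omega>) \<le> ennreal \<alpha> * unfairness K w D f}
    \<subseteq> {\<omega> \<in> space (sample_law n D). ennsqrt (risk K w D f (fh \<omega>))
        \<ge> max (ennsqrt (ennreal \<delta>)) (ennreal (1 - sqrt \<alpha>) * ennsqrt (unfairness K w D f))}"
    using large by (auto simp: max_absorb2)
  show "{\<omega> \<in> space (sample_law n D). ennsqrt (risk K w D f (fh \<omega>))
      \<ge> max (ennsqrt (ennreal \<delta>)) (ennreal (1 - sqrt \<alpha>) * ennsqrt (unfairness K w D f))}
    \<in> sets (sample_law n D)"
    unfolding le_ennsqrt_iff by measurable
qed

lemma valid_estimator_risk_lower_bound: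
  assumes valid: "fh \<in> valid_estimators K w n F \<Theta> D \<alpha> t'" and "0 \<le> \<alpha>"
    and minimax: "(INF fh\<in>estimators K n. SUP (fstar, \<theta>)\<in>F \<times> \<Theta>.
        emeasure (sample_law n (D fstar \<theta>))
          {\<omega> \<in> space (sample_law n (D fstar \<theta>)).
             risk K w (D fstar \<theta>) fstar (fh \<omega>) \<ge> ennreal \<delta>}) \<ge> ennreal t"
    and sets_D: "\<And>fstar \<theta>. (fstar, \<theta>) \<in> F \<times> \<Theta> \<Longrightarrow> sets (D fstar \<theta>) = sets (obs_space K)"
    and measurable: "\<And>fstar \<theta>. (fstar, \<theta>) \<in> F \<times> \<Theta> \<Longrightarrow>
        (\<lambda>z. fstar (fst z) (snd z)) \<in> borel_measurable (borel \<Otimes>\<^sub>M count_space {1..K})"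
    and prob: "\<And>fstar \<theta> s. (fstar, \<theta>) \<in> F \<times> \<Theta> \<Longrightarrow> s \<in> {1..K} \<Longrightarrow>
        prob_space (cond_law K (D fstar \<theta>) fstar s)"
    and moments: "\<And>fstar \<theta> s. (fstar, \<theta>) \<in> F \<times> \<Theta> \<Longrightarrow> s \<in> {1..K} \<Longrightarrow>
        (\<integral>\<^sup>+ x. ennreal (x\<^sup>2) \<partial>cond_law K (D fstar \<theta>) fstar s) < \<top>"
  shows "ennreal (min t (1 - t')) \<le> (SUP (fstar, \<theta>)\<in>F \<times> \<Theta>.
        emeasure (sample_law n (D fstar \<theta>))
          {\<omega> \<in> space (sample_law n (D fstar \<theta>)).
             ennsqrt (risk K w (D fstar \<theta>) fstar (fh \<omega>)) \<ge>
               max (ennsqrt (ennreal \<delta>))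
                   (ennreal (1 - sqrt \<alpha>) * ennsqrt (unfairness K w (D fstar \<theta>) fstar))})"
proof -
  let ?fair = "\<lambda>fstar \<theta>. emeasure (sample_law n (D fstar \<theta>)) {\<omega> \<in> space (sample_law n (D fstar \<theta>)).
    unfairness K w (D fstar \<theta>) (fh \<omega>) \<le> ennreal \<alpha> * unfairness K w (D fstar \<theta>) fstar}"
  have fh: "fh \<in> estimators K n"
    using valid by (simp add: valid_estimators_def)
  show ?thesis
  proof (cases "\<forall>(fstar, \<theta>)\<in>F \<times> \<Theta>.
      ennreal (1 - sqrt \<alpha>) * ennsqrt (unfairness K w (D fstar \<theta>) fstar) \<le> ennsqrt (ennreal \<delta>)")
    case True
    have "ennreal (min t (1 - t')) \<le> ennreal t"
      by (simp add: ennreal_leI)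
    also have "\<dots> \<le> (SUP (fstar, \<theta>)\<in>F \<times> \<Theta>.
        emeasure (sample_law n (D fstar \<theta>))
          {\<omega> \<in> space (sample_law n (D fstar \<theta>)).
             ennsqrt (risk K w (D fstar \<theta>) fstar (fh \<omega>)) \<ge>
               max (ennsqrt (ennreal \<delta>))
                   (ennreal (1 - sqrt \<alpha>) * ennsqrt (unfairness K w (D fstar \<theta>) fstar))})"
      using True by (intro SUP_risk_event_ge_minimax[OF fh minimax]) auto
    finally show ?thesis .
  next
    case False
    then obtain f0 \<theta>0 where p0: "(f0, \<theta>0) \<in> F \<times> \<Theta>"
      and large: "ennsqrt (ennreal \<delta>) \<le> ennreal (1 - sqrt \<alpha>) * ennsqrt (unfairness K w (D f0 \<theta>0) f0)"
      by (auto simp: not_le intro: less_imp_le)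
    have "ennreal (min t (1 - t')) \<le> ennreal (1 - t')"
      by (simp add: ennreal_leI)
    also have "\<dots> \<le> (INF (fstar, \<theta>)\<in>F \<times> \<Theta>. ?fair fstar \<theta>)"
      using valid by (simp add: valid_estimators_def)
    also have "\<dots> \<le> ?fair f0 \<theta>0"
      by (rule INF_lower2[OF p0]) simp
    also note emeasure_fair_event_le_risk_event[OF fh sets_D[OF p0] prob[OF p0] moments[OF p0]
        measurable[OF p0] \<open>0 \<le> \<alpha>\<close> large]
    finally show ?thesis
      using p0 by (auto intro: SUP_upper2)
  qed
qed

theorem theorem2:
  fixes K n :: nat and w :: "nat \<Rightarrow> real"
    and F :: "(real^'p::finite \<Rightarrow> nat \<Rightarrow> real) set" and \<Theta> :: "'th set"
    and D :: "(real^'p \<Rightarrow> nat \<Rightarrow> real) \<Rightarrow> 'th \<Rightarrow> 'p obs measure"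
    and t \<delta> :: real
  assumes K: "K \<ge> 1"
    and w_nonneg: "\<forall>s\<in>{1..K}. w s \<ge> 0" and w_sum: "(\<Sum>s\<in>{1..K}. w s) = 1"
    and model: "\<forall>(fstar, \<theta>)\<in>F \<times> \<Theta>.
        prob_space (D fstar \<theta>) \<and> sets (D fstar \<theta>) = sets (obs_space K) \<and>
        (\<lambda>z. fstar (fst z) (snd z)) \<in> borel_measurable (borel \<Otimes>\<^sub>M count_space {1..K}) \<and>
        integrable (D fstar \<theta>) (\<lambda>\<omega>. Yof \<omega> - fstar (Xof \<omega>) (Sof \<omega>)) \<and>
        (AE \<omega> in D fstar \<theta>. real_cond_exp (D fstar \<theta>)
            (vimage_algebra (space (D fstar \<theta>)) Xof borel)
            (\<lambda>\<omega>. Yof \<omega> - fstar (Xof \<omega>) (Sof \<omega>)) \<omega> = 0)"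
    and nonatomic: "\<forall>(fstar, \<theta>)\<in>F \<times> \<Theta>. \<forall>s\<in>{1..K}.
        prob_space (cond_law K (D fstar \<theta>) fstar s) \<and>
        (\<forall>x. emeasure (cond_law K (D fstar \<theta>) fstar s) {x} = 0) \<and>
        (\<integral>\<^sup>+ x. ennreal (x\<^sup>2) \<partial>cond_law K (D fstar \<theta>) fstar s) < \<top>"
    and t: "0 < t" "t < 1"
    and \<delta>_pos: "\<delta> > 0"
    and minimax: "(INF fh\<in>estimators K n. SUP (fstar, \<theta>)\<in>F \<times> \<Theta>.
        emeasure (sample_law n (D fstar \<theta>))
          {\<omega> \<in> space (sample_law n (D fstar \<theta>)).
             risk K w (D fstar \<theta>) fstar (fh \<omega>) \<ge> ennreal \<delta>}) \<ge> ennreal t"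
  shows "\<forall>\<alpha> t'. 0 \<le> \<alpha> \<and> \<alpha> \<le> 1 \<and> 0 < t' \<and> t' < 1 \<longrightarrow>
    (INF fh\<in>valid_estimators K w n F \<Theta> D \<alpha> t'. SUP (fstar, \<theta>)\<in>F \<times> \<Theta>.
        emeasure (sample_law n (D fstar \<theta>))
          {\<omega> \<in> space (sample_law n (D fstar \<theta>)).
             ennsqrt (risk K w (D fstar \<theta>) fstar (fh \<omega>)) \<ge>
               max (ennsqrt (ennreal \<delta>))
                   (ennreal (1 - sqrt \<alpha>) * ennsqrt (unfairness K w (D fstar \<theta>) fstar))})
      \<ge> ennreal (min t (1 - t'))"
  using model nonatomic
  by (intro allI impI INF_greatest valid_estimator_risk_lower_bound[OF _ _ minimax]) auto

end
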